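(* For every $L$, every $\eta\in\Omega_{\bar\rho^{(L)}}$ and every $u\in\mathcal T_L$, $$\epsilon(u,\eta)=\frac12\Big[F(u+\hat e_3,\eta)-F(u,\eta)+\Delta H_\eta(u)\Big],$$ where $\Delta H_\eta(u)=\sum_{i=1}^2\big[H_\eta(u+\hat e_i)+H_\eta(u-\hat e_i)\big]-4H_\eta(u)$.
   Context: Let $\mathcal T$ be the triangular lattice with vertex set $\mathbb Z^2$, where $u$ is adjacent to $u\pm\hat e_i$, $i=1,2,3$, $\hat e_1=(1,0)$, $\hat e_2=(0,1)$, $\hat e_3=(-1,-1)$, and $\mathcal H$ its dual honeycomb lattice (vertices of $\mathcal T$ = hexagonal faces of $\mathcal H$). For $u\in\mathcal T$, $i\in\{1,2,3\}$, $b_i(u)$ is the edge of $\mathcal H$ crossed by the edge of $\mathcal T$ from $u$ to $u+\hat e_i$ (type-$i$ edge). $\mathcal H_L,\mathcal T_L$ are the quotients by $L\mathbb Z^2$. $\mathbb T$ is the open triangle with vertices $(0,0),(1,0),(0,1)$. For $\bar\rho^{(L)}\in\mathbb T$ with $L\bar\rho^{(L)}_i\in\mathbb N$, $\Omega_{\bar\rho^{(L)}}$ is the set of perfect matchings (dimer coverings) $\eta$ of $\mathcal H_L$ with exactly $L^2\bar\rho^{(L)}_i$ dimers of type $i$, $i=1,2$; $\bar\rho^{(L)}_3=1-\bar\rho^{(L)}_1-\bar\rho^{(L)}_2$. The height function $H_\eta$ on $\mathcal T_L$: $H_\eta(0,0)=0$, $H_\eta(u+\hat e_i)-H_\eta(u)=-\bar\rho^{(L)}_i+\mathbf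 1_{b_i(u)\in\eta}$, $i=1,2,3$. Define $\epsilon(u,\eta)=\mathbf 1_{\{b_1(u),b_2(u)\}\subset\eta}-\mathbf 1_{\{b_1(u-\hat e_1),b_2(u-\hat e_2)\}\subset\eta}\in\{-1,0,1\}$ and $F(u,\eta)=|\mathbf 1_{b_1(u)\in\eta}-\mathbf 1_{b_2(u)\in\eta}|$. *)

theory Defs
  imports Complex_Main "HOL-Library.Product_Plus"
begin

text \<open>Vertices of the triangular lattice T are points of int x int.
  The honeycomb edge b_i(u) of H_L is encoded as the pair (u mod L, i);
  a dimer configuration eta is a set of such pairs.\<close>

definition e :: "nat \<Rightarrow> int \<times> int" where
  "e i = (if i = 1 then (1, 0) else if i = 2 then (0, 1) else (-1, -1))"

definition red :: "int \<Rightarrow> int \<times> int \<Rightarrow> int \<times> int" where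
  "red L u = (fst u mod L, snd u mod L)"

definition inD :: "int \<Rightarrow> ((int \<times> int) \<times> nat) set \<Rightarrow> int \<times> int \<Rightarrow> nat \<Rightarrow> bool" where
  "inD L \<eta> u i \<longleftrightarrow> (red L u, i) \<in> \<eta>"

definition rho :: "real \<Rightarrow> real \<Rightarrow> nat \<Rightarrow> real" where
  "rho r1 r2 i = (if i = 1 then r1 else if i = 2 then r2 else 1 - r1 - r2)"

text \<open>Omega: perfect matchings of H_L with L^2 r1 dimers of type 1 and L^2 r2 of type 2.
  The vertices of H_L are the triangles A(u) = {u, u+e1, u+e1+e2} and
  B(u) = {u, u+e2, u+e1+e2} of T_L; the H-edges incident to A(u) are
  b_1(u), b_2(u+e1), b_3(u+e1+e2), those incident to B(u) are
  b_2(u), b_1(u+e2), b_3(u+e1+e2). Perfect matching = each triangle meets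
  exactly one dimer.\<close>
definition Omega :: "int \<Rightarrow> real \<Rightarrow> real \<Rightarrow> ((int \<times> int) \<times> nat) set set" where
  "Omega L r1 r2 = {\<eta>. \<eta> \<subseteq> ({0..<L} \<times> {0..<L}) \<times> {1, 2, 3} \<and>
     (\<forall>u \<in> {0..<L} \<times> {0..<L}.
        of_bool (inD L \<eta> u 1) + of_bool (inD L \<eta> (u + e 1) 2)
          + of_bool (inD L \<eta> (u + e 1 + e 2) 3) = (1::nat) \<and>
        of_bool (inD L \<eta> u 2) + of_bool (inD L \<eta> (u + e 2) 1)
          + of_bool (inD L \<eta> (u + e 1 + e 2) 3) = (1::nat)) \<and>
     real (card {u. (u, 1) \<in> \<eta>}) = (real_of_int L)^2 * r1 \<and>
     real (card {u. (u, 2) \<in> \<eta>}) = (real_of_int L)^2 * r2}"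

definition height :: "int \<Rightarrow> real \<Rightarrow> real \<Rightarrow> ((int \<times> int) \<times> nat) set \<Rightarrow> int \<times> int \<Rightarrow> real" where
  "height L r1 r2 \<eta> = (THE H. H (0, 0) = 0 \<and>
     (\<forall>u i. i \<in> {1, 2, 3} \<longrightarrow>
        H (u + e i) - H u = - rho r1 r2 i + of_bool (inD L \<eta> u i)))"

definition eps :: "int \<Rightarrow> ((int \<times> int) \<times> nat) set \<Rightarrow> int \<times> int \<Rightarrow> real" where
  "eps L \<eta> u = of_bool (inD L \<eta> u 1 \<and> inD L \<eta> u 2)
     - of_bool (inD L \<eta> (u - e 1) 1 \<and> inD L \<eta> (u - e 2) 2)"

definition Ffun :: "int \<Rightarrow> ((int \<times> int) \<times> nat) set \<Rightarrow> int \<times> int \<Rightarrow> real" where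
  "Ffun L \<eta> u = \<bar>of_bool (inD L \<eta> u 1) - of_bool (inD L \<eta> u 2)\<bar>"

definition lap :: "(int \<times> int \<Rightarrow> real) \<Rightarrow> int \<times> int \<Rightarrow> real" where
  "lap H u = (\<Sum>i\<in>{1, 2::nat}. H (u + e i) + H (u - e i)) - 4 * H u"

end

theory Submission
  imports Defs
begin

text \<open>The increments of the height function along \<open>e 1\<close> and \<open>e 2\<close> form a closed 1-form on
  \<open>\<int>\<^sup>2\<close>: the two triangle constraints of the perfect matching at \<open>v\<close> share the type-3 edge
  \<open>b_3(v + e 1 + e 2)\<close>, so subtracting them gives exactly the commutation of the increments around
  a unit square. Hence \<open>H\<close> exists, and the type-3 increment is then forced by the first triangle
  constraint. In \<open>\<Delta>H(u)\<close> the constants \<open>\<rho>\<^sub>i\<close> cancel, leaving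
  \<open>\<Delta>H(u) = \<eta>(b_1 u) - \<eta>(b_1 (u - e 1)) + \<eta>(b_2 u) - \<eta>(b_2 (u - e 2))\<close>, while the two triangle
  constraints at \<open>u + e 3\<close> give \<open>F(u + e 3) = |\<eta>(b_1(u - e 1)) - \<eta>(b_2(u - e 2))|\<close>.
  The theorem then reduces to the identity
  \<open>xy - x'y' = (|x' - y'| - |x - y| + x - x' + y - y') / 2\<close> for \<open>x, y, x', y' \<in> {0, 1}\<close>.\<close>

definition psum :: "(int \<Rightarrow> real) \<Rightarrow> int \<Rightarrow> real" where
  "psum g a = (if a \<ge> 0 then sum g {0..<a} else - sum g {a..<0})"

lemma psum_0 [simp]: "psum g 0 = 0"
  by (simp add: psum_def)

lemma psum_step: "psum g (a + 1) - psum g a = g a"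
proof (cases "a \<ge> 0")
  case True
  then have "{0..<a + 1} = insert a {0..<a}" by auto
  with True show ?thesis by (simp add: psum_def)
next
  case False
  show ?thesis
  proof (cases "a = -1")
    case True
    moreover have "{-1..<0::int} = {-1}" by auto
    ultimately show ?thesis by (simp add: psum_def)
  next
    case False
    with \<open>\<not> a \<ge> 0\<close> have "{a..<0} = insert a {a + 1..<0}" by auto
    with \<open>\<not> a \<ge> 0\<close> False show ?thesis by (simp add: psum_def)
  qed
qed

lemma psum_diff: "psum (\<lambda>k. f k - g k) a = psum f a - psum g a"
  by (simp add: psum_def sum_subtractf)

lemma psum_telescope: "psum (\<lambda>k. g (k + 1) - g k) a = g a - g 0"
proof (induction a rule: int_induct[where k = 0])
  case (step1 i)
  then show ?case using psum_step[of "\<lambda>k. g (k + 1) - g k" i] by simp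
next
  case (step2 i)
  then show ?case using psum_step[of "\<lambda>k. g (k + 1) - g k" "i - 1"] by simp
qed simp

lemma translation_invariant_int2_const:
  fixes D :: "int \<times> int \<Rightarrow> 'a"
  assumes "\<And>v. D (v + (1, 0)) = D v" and "\<And>v. D (v + (0, 1)) = D v"
  shows "D v = D (0, 0)"
proof -
  have row: "D (a, b) = D (0, b)" for a b
  proof (induction a rule: int_induct[where k = 0])
    case (step1 i)
    then show ?case using assms(1)[of "(i, b)"] by simp
  next
    case (step2 i)
    then show ?case using assms(1)[of "(i - 1, b)"] by simp
  qed simp
  have column: "D (0, b) = D (0, 0)" for b
  proof (induction b rule: int_induct[where k = 0])
    case (step1 i)
    then show ?case using assms(2)[of "(0, i)"] by simp
  next
    case (step2 i)
    then show ?case using assms(2)[of "(0, i - 1)"] by simp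
  qed simp
  obtain a b where "v = (a, b)" by (cases v)
  then show ?thesis using row[of a b] column[of b] by simp
qed

lemma potential_int2_unique:
  fixes H H' :: "int \<times> int \<Rightarrow> real"
  assumes "H (0, 0) = H' (0, 0)"
    and "\<And>v. H (v + (1, 0)) - H v = H' (v + (1, 0)) - H' v"
    and "\<And>v. H (v + (0, 1)) - H v = H' (v + (0, 1)) - H' v"
  shows "H = H'"
proof
  fix v
  have "H v - H' v = H (0, 0) - H' (0, 0)"
    by (rule translation_invariant_int2_const[of "\<lambda>v. H v - H' v"])
      (use assms(2,3) in \<open>simp add: algebra_simps\<close>)+
  with assms(1) show "H v = H' v" by simp
qed

lemma closed_form_int2_potential:
  fixes f g :: "int \<times> int \<Rightarrow> real"
  assumes closed: "\<And>v. g (v + (1, 0)) - g v = f (v + (0, 1)) - f v"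
  obtains H where "H (0, 0) = 0"
    and "\<And>v. H (v + (1, 0)) - H v = f v"
    and "\<And>v. H (v + (0, 1)) - H v = g v"
proof
  define H where "H v = psum (\<lambda>k. f (k, 0)) (fst v) + psum (\<lambda>k. g (fst v, k)) (snd v)" for v
  show "H (0, 0) = 0" by (simp add: H_def)
  show "H (v + (1, 0)) - H v = f v" for v
  proof (cases v)
    case (Pair a b)
    have "psum (\<lambda>k. g (a + 1, k)) b - psum (\<lambda>k. g (a, k)) b
        = psum (\<lambda>k. f (a, k + 1) - f (a, k)) b"
      using closed[of "(a, _)"] by (simp add: psum_diff[symmetric])
    also have "\<dots> = f (a, b) - f (a, 0)"
      by (rule psum_telescope)
    finally show ?thesis
      using psum_step[of "\<lambda>k. f (k, 0)" a] by (simp add: H_def Pair)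
  qed
  show "H (v + (0, 1)) - H v = g v" for v
    using psum_step[of "\<lambda>k. g (fst v, k)" "snd v"] by (cases v) (simp add: H_def)
qed

lemma of_bool_sum3_eq_1_real:
  "of_bool P + of_bool Q + of_bool R = (1::nat) \<Longrightarrow> of_bool P + of_bool Q + of_bool R = (1::real)"
  by (cases P; cases Q; cases R) simp_all

lemma inD_red_add: "inD L \<eta> (red L u + v) i = inD L \<eta> (u + v) i"
  by (cases u; cases v) (simp add: inD_def red_def mod_add_left_eq)

definition occ :: "int \<Rightarrow> ((int \<times> int) \<times> nat) set \<Rightarrow> int \<times> int \<Rightarrow> nat \<Rightarrow> real" where
  "occ L \<eta> v i = of_bool (inD L \<eta> v i)"

definition is_height :: "int \<Rightarrow> real \<Rightarrow> real \<Rightarrow> ((int \<times> int) \<times> nat) set \<Rightarrow> (int \<times> int \<Rightarrow> real) \<Rightarrow> bool"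
  where "is_height L r1 r2 \<eta> H \<longleftrightarrow> H (0, 0) = 0 \<and>
     (\<forall>v i. i \<in> {1, 2, 3} \<longrightarrow> H (v + e i) - H v = - rho r1 r2 i + occ L \<eta> v i)"

lemma is_height_step:
  assumes "is_height L r1 r2 \<eta> H" and "i \<in> {1, 2, 3}"
  shows "H (v + e i) - H v = - rho r1 r2 i + occ L \<eta> v i"
  using assms unfolding is_height_def by blast

lemma Omega_triangles:
  assumes "L \<ge> 1" and "\<eta> \<in> Omega L r1 r2"
  shows "occ L \<eta> v 1 + occ L \<eta> (v + e 1) 2 + occ L \<eta> (v + e 1 + e 2) 3 = 1"
    and "occ L \<eta> v 2 + occ L \<eta> (v + e 2) 1 + occ L \<eta> (v + e 1 + e 2) 3 = 1"
proof -
  have red_in_box: "red L v \<in> {0..<L} \<times> {0..<L}"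
    using assms(1) by (cases v) (simp add: red_def)
  have box: "\<forall>w \<in> {0..<L} \<times> {0..<L}.
      of_bool (inD L \<eta> w 1) + of_bool (inD L \<eta> (w + e 1) 2)
        + of_bool (inD L \<eta> (w + e 1 + e 2) 3) = (1::nat) \<and>
      of_bool (inD L \<eta> w 2) + of_bool (inD L \<eta> (w + e 2) 1)
        + of_bool (inD L \<eta> (w + e 1 + e 2) 3) = (1::nat)"
    using assms(2) by (simp add: Omega_def)
  have inD_red: "inD L \<eta> (red L v) i = inD L \<eta> v i" for i
    using inD_red_add[of L \<eta> v 0] by simp
  have
    "of_bool (inD L \<eta> v 1) + of_bool (inD L \<eta> (v + e 1) 2)
        + of_bool (inD L \<eta> (v + e 1 + e 2) 3) = (1::nat) \<and>
     of_bool (inD L \<eta> v 2) + of_bool (inD L \<eta> (v + e 2) 1)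
        + of_bool (inD L \<eta> (v + e 1 + e 2) 3) = (1::nat)"
    using bspec[OF box red_in_box] by (simp only: inD_red_add inD_red add.assoc)
  then show "occ L \<eta> v 1 + occ L \<eta> (v + e 1) 2 + occ L \<eta> (v + e 1 + e 2) 3 = 1"
    and "occ L \<eta> v 2 + occ L \<eta> (v + e 2) 1 + occ L \<eta> (v + e 1 + e 2) 3 = 1"
    unfolding occ_def by (meson of_bool_sum3_eq_1_real)+
qed

lemma Omega_is_height_exists:
  assumes "L \<ge> 1" and "\<eta> \<in> Omega L r1 r2"
  shows "\<exists>H. is_height L r1 r2 \<eta> H"
proof -
  define f where "f v = - r1 + occ L \<eta> v 1" for v
  define g where "g v = - r2 + occ L \<eta> v 2" for v
  note triangles = Omega_triangles[OF assms]
  have closed: "g (v + (1, 0)) - g v = f (v + (0, 1)) - f v" for v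
    using triangles[of v] by (simp add: f_def g_def e_def)
  obtain H where H0: "H (0, 0) = 0"
    and H1: "\<And>v. H (v + (1, 0)) - H v = f v" and H2: "\<And>v. H (v + (0, 1)) - H v = g v"
    using closed_form_int2_potential[OF closed] by blast
  have H3: "H (v + (-1, -1)) - H v = - (1 - r1 - r2) + occ L \<eta> v 3" for v
  proof -
    define w where "w = v + (-1, -1)"
    have "v = w + (1, 0) + (0, 1)" by (cases v) (simp add: w_def)
    then have "H v - H w = f w + g (w + (1, 0))"
      using H1[of w] H2[of "w + (1, 0)"] by simp
    moreover have "occ L \<eta> w 1 + occ L \<eta> (w + (1, 0)) 2 + occ L \<eta> v 3 = 1"
      using triangles(1)[of w] \<open>v = _\<close> by (simp add: e_def)
    ultimately show ?thesis by (simp add: w_def f_def g_def)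
  qed
  have "is_height L r1 r2 \<eta> H"
    using H0 H1 H2 H3 by (auto simp: is_height_def e_def rho_def f_def g_def)
  then show ?thesis by blast
qed

lemma is_height_unique:
  assumes "is_height L r1 r2 \<eta> H" and "is_height L r1 r2 \<eta> H'"
  shows "H = H'"
proof (rule potential_int2_unique)
  have step: "\<And>v i. i \<in> {1, 2, 3} \<Longrightarrow> H (v + e i) - H v = H' (v + e i) - H' v"
    using is_height_step[OF assms(1)] is_height_step[OF assms(2)] by simp
  show "H (v + (1, 0)) - H v = H' (v + (1, 0)) - H' v" for v
    using step[of 1 v] by (simp add: e_def)
  show "H (v + (0, 1)) - H v = H' (v + (0, 1)) - H' v" for v
    using step[of 2 v] by (simp add: e_def)
qed (use assms in \<open>simp add: is_height_def\<close>)

lemma is_height_height: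
  assumes "L \<ge> 1" and "\<eta> \<in> Omega L r1 r2"
  shows "is_height L r1 r2 \<eta> (height L r1 r2 \<eta>)"
proof -
  have "\<exists>!H. is_height L r1 r2 \<eta> H"
    using Omega_is_height_exists[OF assms] is_height_unique by blast
  then show ?thesis
    unfolding height_def is_height_def[symmetric] occ_def[symmetric] by (rule theI')
qed

lemma lap_is_height:
  assumes "is_height L r1 r2 \<eta> H"
  shows "lap H u = occ L \<eta> u 1 - occ L \<eta> (u - e 1) 1 + occ L \<eta> u 2 - occ L \<eta> (u - e 2) 2"
proof -
  have step: "H (v + e i) - H v = - rho r1 r2 i + occ L \<eta> v i" if "i \<in> {1, 2}" for v i
    using is_height_step[OF assms] that by blast
  have "H (u + e 1) - H u = - r1 + occ L \<eta> u 1"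
    and "H u - H (u - e 1) = - r1 + occ L \<eta> (u - e 1) 1"
    and "H (u + e 2) - H u = - r2 + occ L \<eta> u 2"
    and "H u - H (u - e 2) = - r2 + occ L \<eta> (u - e 2) 2"
    using step[of 1 u] step[of 1 "u - e 1"] step[of 2 u] step[of 2 "u - e 2"]
    by (simp_all add: rho_def)
  moreover have "lap H u = H (u + e 1) + H (u - e 1) + H (u + e 2) + H (u - e 2) - 4 * H u"
    by (simp add: lap_def)
  ultimately show ?thesis by linarith
qed

lemma Omega_occ_diff_shift:
  assumes "L \<ge> 1" and "\<eta> \<in> Omega L r1 r2"
  shows "occ L \<eta> (u + e 3) 1 - occ L \<eta> (u + e 3) 2 = occ L \<eta> (u - e 1) 1 - occ L \<eta> (u - e 2) 2"
proof -
  obtain a b where "u = (a, b)" by (cases u)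
  with Omega_triangles[OF assms, of "u + e 3"] show ?thesis by (simp add: e_def)
qed

lemma of_bool_conj_diff:
  "(of_bool (x \<and> y) - of_bool (x' \<and> y') :: real) =
     1/2 * (\<bar>of_bool x' - of_bool y'\<bar> - \<bar>of_bool x - of_bool y\<bar>
       + (of_bool x - of_bool x' + of_bool y - of_bool y'))"
  by (cases x; cases y; cases x'; cases y') simp_all

theorem lemma1:
  fixes L :: int and r1 r2 :: real
    and \<eta> :: "((int \<times> int) \<times> nat) set" and u :: "int \<times> int"
  assumes "L \<ge> 1"
    and "r1 > 0" and "r2 > 0" and "r1 + r2 < 1"
    and "\<exists>n::nat. real_of_int L * r1 = real n"
    and "\<exists>n::nat. real_of_int L * r2 = real n"
    and "\<eta> \<in> Omega L r1 r2"
    and "u \<in> {0..<L} \<times> {0..<L}"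
  shows "eps L \<eta> u = 1/2 * (Ffun L \<eta> (u + e 3) - Ffun L \<eta> u + lap (height L r1 r2 \<eta>) u)"
proof -
  have "lap (height L r1 r2 \<eta>) u
      = occ L \<eta> u 1 - occ L \<eta> (u - e 1) 1 + occ L \<eta> u 2 - occ L \<eta> (u - e 2) 2"
    using lap_is_height is_height_height[OF assms(1,7)] by blast
  moreover have "Ffun L \<eta> (u + e 3) = \<bar>occ L \<eta> (u - e 1) 1 - occ L \<eta> (u - e 2) 2\<bar>"
    using Omega_occ_diff_shift[OF assms(1,7)] by (simp add: Ffun_def occ_def)
  ultimately show ?thesis
    by (simp add: eps_def Ffun_def occ_def of_bool_conj_diff)
qed

end
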